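(* Let $K$ be a finite field, $G$ a finite group and $C$ a right ideal of the group algebra $KG$. Then $C$ is checkable if and only if the orthogonal space $C^\perp$ (with respect to the standard bilinear form on $KG$) is a principal right ideal of $KG$.
   Context: $KG$ is the group algebra with $K$-basis $\{g: g\in G\}$. It carries the symmetric nondegenerate bilinear form $\langle\cdot,\cdot\rangle$ defined by $\langle g,h\rangle=\delta_{g,h}$ for $g,h\in G$, and $C^\perp=\{a\in KG:\langle a,c\rangle=0 \text{ for all } c\in C\}$. For $C\subseteq KG$, $\operatorname{ann}_r(C)=\{a\in KG: ca=0 \ \forall c\in C\}$. A right ideal $I\le KG$ is called checkable if there is $v\in KG$ with $I=\{a\in KG: va=0\}=\operatorname{ann}_r(KGv)$. *)

theory Defs
  imports "HOL-Algebra.Group"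
begin

text \<open>The group algebra KG of a finite group G (HOL-Algebra structure) over a field
of type 'k: elements are functions from the group elements to 'k vanishing
outside the carrier; the basis element g corresponds to the indicator of g.\<close>

definition group_alg :: "('g, 'b) monoid_scheme \<Rightarrow> ('g \<Rightarrow> 'k::field) set" where
  "group_alg G = {a. \<forall>x. x \<notin> carrier G \<longrightarrow> a x = 0}"

definition ga_add :: "('g \<Rightarrow> 'k::field) \<Rightarrow> ('g \<Rightarrow> 'k) \<Rightarrow> ('g \<Rightarrow> 'k)" where
  "ga_add a b = (\<lambda>x. a x + b x)"

definition ga_mult :: "('g, 'b) monoid_scheme \<Rightarrow> ('g \<Rightarrow> 'k::field) \<Rightarrow> ('g \<Rightarrow> 'k) \<Rightarrow> ('g \<Rightarrow> 'k)" where
  "ga_mult G a b = (\<lambda>x. if x \<in> carrier G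
      then (\<Sum>y\<in>carrier G. a y * b (inv\<^bsub>G\<^esub> y \<otimes>\<^bsub>G\<^esub> x)) else 0)"

definition ga_form :: "('g, 'b) monoid_scheme \<Rightarrow> ('g \<Rightarrow> 'k::field) \<Rightarrow> ('g \<Rightarrow> 'k) \<Rightarrow> 'k" where
  "ga_form G a b = (\<Sum>g\<in>carrier G. a g * b g)"

definition ga_perp :: "('g, 'b) monoid_scheme \<Rightarrow> ('g \<Rightarrow> 'k::field) set \<Rightarrow> ('g \<Rightarrow> 'k) set" where
  "ga_perp G C = {a \<in> group_alg G. \<forall>c\<in>C. ga_form G a c = 0}"

definition right_ideal :: "('g, 'b) monoid_scheme \<Rightarrow> ('g \<Rightarrow> 'k::field) set \<Rightarrow> bool" where
  "right_ideal G I \<longleftrightarrow> I \<subseteq> group_alg G \<and> (\<lambda>_. 0) \<in> I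
     \<and> (\<forall>a\<in>I. \<forall>b\<in>I. ga_add a b \<in> I)
     \<and> (\<forall>a\<in>I. (\<lambda>x. - a x) \<in> I)
     \<and> (\<forall>a\<in>I. \<forall>r\<in>group_alg G. ga_mult G a r \<in> I)"

definition principal_right_ideal :: "('g, 'b) monoid_scheme \<Rightarrow> ('g \<Rightarrow> 'k::field) set \<Rightarrow> bool" where
  "principal_right_ideal G I \<longleftrightarrow>
     (\<exists>g\<in>group_alg G. I = {ga_mult G g r | r. r \<in> group_alg G})"

definition checkable :: "('g, 'b) monoid_scheme \<Rightarrow> ('g \<Rightarrow> 'k::field) set \<Rightarrow> bool" where
  "checkable G I \<longleftrightarrow>
     (\<exists>v\<in>group_alg G. I = {a \<in> group_alg G. ga_mult G v a = (\<lambda>_. 0)})"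

end

theory Submission
  imports Defs
begin

text \<open>
  The involution \<open>a\<^sup>* (g) = a (g\<inverse>)\<close> is the adjoint of left multiplication for the
  standard form, \<open>\<langle>a, c r\<rangle> = \<langle>c\<^sup>* a, r\<rangle>\<close>, and the form is nondegenerate. Hence the
  orthogonal space of a principal right ideal \<open>w KG\<close> is the right annihilator of
  \<open>w\<^sup>*\<close>, i.e. \<open>(w KG)\<^sup>\<bottom> = ann\<^sub>r(KG w\<^sup>*)\<close>. A double count of orthogonal pairs shows
  \<open>|S| \<cdot> |S\<^sup>\<bottom>| = |KG|\<close> for every subspace \<open>S\<close>, whence \<open>S\<^sup>\<bottom>\<^sup>\<bottom> = S\<close>. Now if
  \<open>C = ann\<^sub>r(KG v)\<close> then \<open>C = (v\<^sup>* KG)\<^sup>\<bottom>\<close>, so \<open>C\<^sup>\<bottom> = v\<^sup>* KG\<close>; conversely if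
  \<open>C\<^sup>\<bottom> = w KG\<close> then \<open>C = C\<^sup>\<bottom>\<^sup>\<bottom> = ann\<^sub>r(KG w\<^sup>*)\<close>.
\<close>

definition ga_scale :: "'k::field \<Rightarrow> ('g \<Rightarrow> 'k) \<Rightarrow> ('g \<Rightarrow> 'k)" where
  "ga_scale k a = (\<lambda>x. k * a x)"

definition ga_adjoint :: "('g, 'b) monoid_scheme \<Rightarrow> ('g \<Rightarrow> 'k::field) \<Rightarrow> ('g \<Rightarrow> 'k)" where
  "ga_adjoint G a = (\<lambda>x. if x \<in> carrier G then a (inv\<^bsub>G\<^esub> x) else 0)"

definition ga_basis :: "'g \<Rightarrow> ('g \<Rightarrow> 'k::field)" where
  "ga_basis g = (\<lambda>x. if x = g then 1 else 0)"

definition ga_subspace :: "('g, 'b) monoid_scheme \<Rightarrow> ('g \<Rightarrow> 'k::field) set \<Rightarrow> bool" where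
  "ga_subspace G S \<longleftrightarrow> S \<subseteq> group_alg G \<and> (\<lambda>_. 0) \<in> S
     \<and> (\<forall>a\<in>S. \<forall>b\<in>S. ga_add a b \<in> S) \<and> (\<forall>k. \<forall>a\<in>S. ga_scale k a \<in> S)"

lemma group_alg_add: "a \<in> group_alg G \<Longrightarrow> b \<in> group_alg G \<Longrightarrow> ga_add a b \<in> group_alg G"
  by (simp add: group_alg_def ga_add_def)

lemma group_alg_scale: "a \<in> group_alg G \<Longrightarrow> ga_scale k a \<in> group_alg G"
  by (simp add: group_alg_def ga_scale_def)

lemma group_alg_zero: "(\<lambda>_. 0) \<in> group_alg G"
  by (simp add: group_alg_def)

lemma group_alg_mult: "ga_mult G a b \<in> group_alg G"
  by (simp add: group_alg_def ga_mult_def)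

lemma group_alg_adjoint: "ga_adjoint G a \<in> group_alg G"
  by (simp add: group_alg_def ga_adjoint_def)

lemma group_alg_basis: "g \<in> carrier G \<Longrightarrow> ga_basis g \<in> group_alg G"
  by (simp add: group_alg_def ga_basis_def)

lemma ga_form_commute: "ga_form G a b = ga_form G b a"
  by (simp add: ga_form_def mult.commute)

lemma ga_form_add_left: "ga_form G (ga_add a b) c = ga_form G a c + ga_form G b c"
  by (simp add: ga_form_def ga_add_def distrib_right sum.distrib)

lemma ga_form_scale_left: "ga_form G (ga_scale k a) c = k * ga_form G a c"
  by (simp add: ga_form_def ga_scale_def sum_distrib_left mult.assoc)

lemma ga_form_zero_left: "ga_form G (\<lambda>_. 0) c = 0"
  by (simp add: ga_form_def)

lemma ga_subspace_principal: "ga_subspace G {ga_mult G w r | r. r \<in> group_alg G}"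
    (is "ga_subspace G ?P")
proof -
  have "ga_add (ga_mult G w r) (ga_mult G w s) = ga_mult G w (ga_add r s)" for r s
    by (simp add: ga_mult_def ga_add_def fun_eq_iff distrib_left sum.distrib)
  hence add: "ga_add a b \<in> ?P" if "a \<in> ?P" "b \<in> ?P" for a b
    using that group_alg_add by blast
  have "ga_scale k (ga_mult G w r) = ga_mult G w (ga_scale k r)" for k r
    by (simp add: ga_mult_def ga_scale_def fun_eq_iff sum_distrib_left mult.left_commute)
  hence scale: "ga_scale k a \<in> ?P" if "a \<in> ?P" for k a
    using that group_alg_scale by blast
  have "(\<lambda>_. 0) = ga_mult G w (\<lambda>_. 0)"
    by (simp add: ga_mult_def fun_eq_iff)
  hence "(\<lambda>_. 0) \<in> ?P"
    using group_alg_zero by blast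
  with add scale show ?thesis
    unfolding ga_subspace_def using group_alg_mult by blast
qed

lemma ga_subspace_perp: "ga_subspace G (ga_perp G S)"
  by (auto simp: ga_subspace_def ga_perp_def group_alg_add group_alg_scale group_alg_zero
      ga_form_add_left ga_form_scale_left ga_form_zero_left)

lemma card_UNIV_field_ge_2: "card (UNIV :: 'k::{field,finite} set) \<ge> 2"
proof -
  have "card {0::'k, 1} = 2" by simp
  moreover have "card {0::'k, 1} \<le> card (UNIV :: 'k set)" by (rule card_mono) auto
  ultimately show ?thesis by simp
qed

lemma sum_card_filter_commute:
  assumes "finite A" and "finite B"
  shows "(\<Sum>x\<in>A. card {y\<in>B. P x y}) = (\<Sum>y\<in>B. card {x\<in>A. P x y})"
proof -
  have "(\<Sum>x\<in>A. card {y\<in>B. P x y}) = (\<Sum>x\<in>A. \<Sum>y\<in>B. if P x y then 1 else 0)"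
    using assms(2) by (simp add: sum.If_cases Int_def conj_commute)
  also have "\<dots> = (\<Sum>y\<in>B. \<Sum>x\<in>A. if P x y then 1 else 0)"
    by (rule sum.swap)
  also have "\<dots> = (\<Sum>y\<in>B. card {x\<in>A. P x y})"
    using assms(1) by (simp add: sum.If_cases Int_def conj_commute)
  finally show ?thesis .
qed

lemma card_eq_card_kernel_mult:
  fixes W :: "('g \<Rightarrow> 'k::{field,finite}) set" and f :: "('g \<Rightarrow> 'k) \<Rightarrow> 'k"
  assumes fin: "finite W"
    and add: "\<And>a b. a \<in> W \<Longrightarrow> b \<in> W \<Longrightarrow> ga_add a b \<in> W"
    and scale: "\<And>k a. a \<in> W \<Longrightarrow> ga_scale k a \<in> W"
    and f_add: "\<And>a b. a \<in> W \<Longrightarrow> b \<in> W \<Longrightarrow> f (ga_add a b) = f a + f b"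
    and f_scale: "\<And>k a. a \<in> W \<Longrightarrow> f (ga_scale k a) = k * f a"
    and w: "w \<in> W" "f w \<noteq> 0"
  shows "card W = card (UNIV :: 'k set) * card {a\<in>W. f a = 0}"
proof -
  define u where "u = ga_scale (inverse (f w)) w"
  have u: "u \<in> W" "f u = 1"
    using scale f_scale w by (simp_all add: u_def)
  define F where "F t = {a\<in>W. f a = t}" for t
  have fibre: "card (F t) = card (F 0)" for t
  proof -
    let ?shift = "\<lambda>a. ga_add a (ga_scale t u)"
    have "?shift ` F 0 = F t"
    proof
      show "?shift ` F 0 \<subseteq> F t"
        using add scale f_add f_scale u by (auto simp: F_def)
      show "F t \<subseteq> ?shift ` F 0"
      proof
        fix y assume y: "y \<in> F t"
        define x where "x = ga_add y (ga_scale (- t) u)"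
        have "x \<in> F 0"
          using y add scale f_add f_scale u by (auto simp: F_def x_def)
        moreover have "y = ?shift x"
          by (simp add: x_def ga_add_def ga_scale_def fun_eq_iff)
        ultimately show "y \<in> ?shift ` F 0" by blast
      qed
    qed
    moreover have "inj_on ?shift (F 0)"
      by (rule inj_onI) (simp add: ga_add_def fun_eq_iff)
    ultimately show ?thesis by (metis card_image)
  qed
  have "W = (\<Union>t. F t)" by (auto simp: F_def)
  hence "card W = card (\<Union>t. F t)" by simp
  also have "\<dots> = (\<Sum>t\<in>UNIV. card (F t))"
    by (rule card_UN_disjoint) (auto simp: F_def intro: finite_subset[OF _ fin])
  also have "\<dots> = (\<Sum>t\<in>(UNIV :: 'k set). card (F 0))"
    by (rule sum.cong[OF refl]) (rule fibre)
  also have "\<dots> = card (UNIV :: 'k set) * card (F 0)"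
    by simp
  finally show ?thesis by (simp add: F_def)
qed

locale finite_group_algebra = group G for G :: "('g, 'b) monoid_scheme" (structure) +
  assumes finite_carrier: "finite (carrier G)"
begin

lemma finite_group_alg: "finite (group_alg G :: ('g \<Rightarrow> 'k::{field,finite}) set)"
proof -
  have "group_alg G = {f :: 'g \<Rightarrow> 'k. \<forall>x. (x \<in> carrier G \<longrightarrow> f x \<in> UNIV) \<and> (x \<notin> carrier G \<longrightarrow> f x = 0)}"
    by (auto simp: group_alg_def)
  thus ?thesis using finite_set_of_finite_funs[OF finite_carrier finite_UNIV, of 0] by simp
qed

lemma ga_adjoint_adjoint: "a \<in> group_alg G \<Longrightarrow> ga_adjoint G (ga_adjoint G a) = a"
  by (auto simp: ga_adjoint_def fun_eq_iff group_alg_def)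

lemma ga_form_basis:
  assumes "g \<in> carrier G"
  shows "ga_form G a (ga_basis g) = a g"
proof -
  have "ga_form G a (ga_basis g) = (\<Sum>h\<in>carrier G. if h = g then a h else 0)"
    by (auto simp: ga_form_def ga_basis_def intro!: sum.cong)
  thus ?thesis using assms finite_carrier by simp
qed

lemma ga_form_nondegenerate:
  assumes "a \<in> group_alg G" and "\<And>r. r \<in> group_alg G \<Longrightarrow> ga_form G a r = 0"
  shows "a = (\<lambda>_. 0)"
proof
  fix g show "a g = 0"
  proof (cases "g \<in> carrier G")
    case True
    thus ?thesis using assms(2)[OF group_alg_basis[OF True]] ga_form_basis[OF True] by metis
  qed (use assms(1) in \<open>simp add: group_alg_def\<close>)
qed

lemma ga_form_mult_adjoint:
  shows "ga_form G a (ga_mult G c r) = ga_form G (ga_mult G (ga_adjoint G c) a) r"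
proof -
  have "ga_form G a (ga_mult G c r) = (\<Sum>x\<in>carrier G. \<Sum>y\<in>carrier G. c y * a x * r (inv y \<otimes> x))"
    by (simp add: ga_form_def ga_mult_def sum_distrib_left ac_simps)
  also have "\<dots> = (\<Sum>y\<in>carrier G. \<Sum>x\<in>carrier G. c y * a x * r (inv y \<otimes> x))"
    by (rule sum.swap)
  also have "\<dots> = (\<Sum>y\<in>carrier G. \<Sum>g\<in>carrier G. c y * a (y \<otimes> g) * r g)"
  proof (rule sum.cong[OF refl])
    fix y assume y: "y \<in> carrier G"
    show "(\<Sum>x\<in>carrier G. c y * a x * r (inv y \<otimes> x)) = (\<Sum>g\<in>carrier G. c y * a (y \<otimes> g) * r g)"
      by (rule sum.reindex_bij_witness[of _ "\<lambda>g. y \<otimes> g" "\<lambda>x. inv y \<otimes> x"])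
         (use y in \<open>auto simp: m_assoc[symmetric]\<close>)
  qed
  also have "\<dots> = (\<Sum>y\<in>carrier G. \<Sum>g\<in>carrier G. c (inv y) * a (inv y \<otimes> g) * r g)"
    by (rule sum.reindex_bij_witness[of _ "\<lambda>y. inv y" "\<lambda>y. inv y"]) auto
  also have "\<dots> = (\<Sum>g\<in>carrier G. \<Sum>y\<in>carrier G. c (inv y) * a (inv y \<otimes> g) * r g)"
    by (rule sum.swap)
  also have "\<dots> = ga_form G (ga_mult G (ga_adjoint G c) a) r"
    by (simp add: ga_form_def ga_mult_def ga_adjoint_def sum_distrib_right)
  finally show ?thesis .
qed

lemma ga_mult_scale_basis_one:
  assumes "c \<in> group_alg G"
  shows "ga_mult G c (ga_scale k (ga_basis \<one>)) = ga_scale k c"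
proof
  fix x show "ga_mult G c (ga_scale k (ga_basis \<one>)) x = ga_scale k c x"
  proof (cases "x \<in> carrier G")
    case True
    have "inv y \<otimes> x = \<one> \<longleftrightarrow> y = x" if "y \<in> carrier G" for y
      using True that by (metis inv_equality inv_inv inv_closed l_inv)
    with True have "ga_mult G c (ga_scale k (ga_basis \<one>)) x
        = (\<Sum>y\<in>carrier G. if y = x then c y * k else 0)"
      by (auto simp: ga_mult_def ga_scale_def ga_basis_def intro!: sum.cong)
    with True finite_carrier show ?thesis
      by (simp add: ga_scale_def mult.commute)
  next
    case False
    thus ?thesis using assms by (simp add: ga_mult_def ga_scale_def group_alg_def)
  qed
qed

lemma ga_subspace_right_ideal:
  assumes "right_ideal G C"
  shows "ga_subspace G C"
proof -
  have "ga_scale k c \<in> C" if "c \<in> C" for k c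
  proof -
    have "c \<in> group_alg G" using assms that by (auto simp: right_ideal_def)
    hence "ga_scale k c = ga_mult G c (ga_scale k (ga_basis \<one>))"
      by (simp add: ga_mult_scale_basis_one)
    moreover have "ga_scale k (ga_basis \<one>) \<in> group_alg G"
      by (simp add: group_alg_scale group_alg_basis)
    ultimately show ?thesis
      using assms that unfolding right_ideal_def by metis
  qed
  thus ?thesis using assms by (auto simp: ga_subspace_def right_ideal_def)
qed

lemma ga_perp_principal:
  "ga_perp G {ga_mult G w r | r. r \<in> group_alg G}
     = {a \<in> group_alg G. ga_mult G (ga_adjoint G w) a = (\<lambda>_. 0)}"
proof -
  have "a \<in> ga_perp G {ga_mult G w r | r. r \<in> group_alg G} \<longleftrightarrow> a \<in> group_alg G
      \<and> (\<forall>r\<in>group_alg G. ga_form G (ga_mult G (ga_adjoint G w) a) r = 0)" for a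
    by (auto simp: ga_perp_def ga_form_mult_adjoint)
  moreover have "(\<forall>r\<in>group_alg G. ga_form G (ga_mult G (ga_adjoint G w) a) r = 0)
      \<longleftrightarrow> ga_mult G (ga_adjoint G w) a = (\<lambda>_. 0)" for a
    using ga_form_nondegenerate[OF group_alg_mult] ga_form_zero_left by metis
  ultimately show ?thesis by blast
qed

lemma card_group_alg_orthogonal:
  fixes s :: "'g \<Rightarrow> 'k::{field,finite}"
  assumes "s \<in> group_alg G" and "s \<noteq> (\<lambda>_. 0)"
  shows "card (group_alg G :: ('g \<Rightarrow> 'k) set)
    = card (UNIV :: 'k set) * card {a \<in> group_alg G. ga_form G a s = 0}"
proof -
  obtain g where g: "s g \<noteq> 0" using assms(2) by auto
  hence "g \<in> carrier G" using assms(1) by (auto simp: group_alg_def)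
  hence basis: "ga_basis g \<in> group_alg G" "ga_form G (ga_basis g) s \<noteq> 0"
    using g by (simp_all add: group_alg_basis ga_form_commute[of G _ s] ga_form_basis)
  show ?thesis
    by (rule card_eq_card_kernel_mult[where f = "\<lambda>a. ga_form G a s" and w = "ga_basis g"])
      (simp_all add: basis finite_group_alg group_alg_add group_alg_scale
        ga_form_add_left ga_form_scale_left)
qed

lemma card_subspace_orthogonal:
  fixes S :: "('g \<Rightarrow> 'k::{field,finite}) set"
  assumes S: "ga_subspace G S" and "c \<in> S" and "ga_form G a c \<noteq> 0"
  shows "card S = card (UNIV :: 'k set) * card {s \<in> S. ga_form G a s = 0}"
proof (rule card_eq_card_kernel_mult[where f = "ga_form G a" and w = c])
  show "finite S"
    using S finite_group_alg by (auto simp: ga_subspace_def intro: finite_subset)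
qed (use assms in \<open>auto simp: ga_subspace_def ga_form_commute[of G a]
                     ga_form_add_left ga_form_scale_left\<close>)

lemma card_orthogonal_pairs_by_subspace:
  fixes S :: "('g \<Rightarrow> 'k::{field,finite}) set"
  assumes S: "ga_subspace G S"
  shows "card (UNIV :: 'k set) * (\<Sum>s\<in>S. card {a \<in> group_alg G. ga_form G a s = 0})
      + card (group_alg G :: ('g \<Rightarrow> 'k) set)
    = card (UNIV :: 'k set) * card (group_alg G :: ('g \<Rightarrow> 'k) set)
      + card S * card (group_alg G :: ('g \<Rightarrow> 'k) set)"
proof -
  let ?V = "group_alg G :: ('g \<Rightarrow> 'k) set" and ?q = "card (UNIV :: 'k set)"
  have zero: "(\<lambda>_. 0) \<in> S" and SV: "S \<subseteq> ?V"
    using S by (auto simp: ga_subspace_def)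
  have fin_S: "finite S"
    using SV finite_group_alg by (rule finite_subset)
  have "{a \<in> ?V. ga_form G a (\<lambda>_. 0) = 0} = ?V"
    by (simp add: ga_form_def)
  hence "?q * (\<Sum>s\<in>S. card {a \<in> ?V. ga_form G a s = 0})
      = ?q * card ?V + (\<Sum>s\<in>S - {\<lambda>_. 0}. ?q * card {a \<in> ?V. ga_form G a s = 0})"
    unfolding sum_distrib_left by (simp add: sum.remove[OF fin_S zero])
  also have "\<dots> = ?q * card ?V + (\<Sum>s\<in>S - {\<lambda>_. 0}. card ?V)"
  proof -
    have "?q * card {a \<in> ?V. ga_form G a s = 0} = card ?V" if "s \<in> S - {\<lambda>_. 0}" for s
      using that SV card_group_alg_orthogonal[of s] by auto
    thus ?thesis by simp
  qed
  also have "\<dots> = ?q * card ?V + (card S - 1) * card ?V"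
    by (simp add: card_Diff_singleton[OF zero])
  finally show ?thesis
    using zero fin_S by (cases "card S") auto
qed

lemma card_orthogonal_pairs_by_group_alg:
  fixes S :: "('g \<Rightarrow> 'k::{field,finite}) set"
  assumes S: "ga_subspace G S"
  shows "card (UNIV :: 'k set) * (\<Sum>a\<in>group_alg G. card {s \<in> S. ga_form G a s = 0})
      + card (ga_perp G S) * card S
    = card (group_alg G :: ('g \<Rightarrow> 'k) set) * card S
      + card (ga_perp G S) * (card (UNIV :: 'k set) * card S)"
proof -
  let ?V = "group_alg G :: ('g \<Rightarrow> 'k) set" and ?q = "card (UNIV :: 'k set)"
    and ?P = "ga_perp G S"
  have PV: "?P \<subseteq> ?V"
    by (auto simp: ga_perp_def)
  have fin_P: "finite ?P"
    using PV finite_group_alg by (rule finite_subset)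
  have outside: "?q * card {s \<in> S. ga_form G a s = 0} = card S" if "a \<in> ?V - ?P" for a
  proof -
    have "\<not> (\<forall>c\<in>S. ga_form G a c = 0)"
      using that by (simp add: ga_perp_def)
    then obtain c where "c \<in> S" "ga_form G a c \<noteq> 0"
      by blast
    thus ?thesis using card_subspace_orthogonal[OF S] by simp
  qed
  have inside: "{s \<in> S. ga_form G a s = 0} = S" if "a \<in> ?P" for a
    using that by (auto simp: ga_perp_def)
  have "?q * (\<Sum>a\<in>?V. card {s \<in> S. ga_form G a s = 0})
      = (\<Sum>a\<in>?V - ?P. ?q * card {s \<in> S. ga_form G a s = 0})
        + (\<Sum>a\<in>?P. ?q * card {s \<in> S. ga_form G a s = 0})"
    using sum.subset_diff[OF PV finite_group_alg] by (simp add: sum_distrib_left)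
  also have "\<dots> = (\<Sum>a\<in>?V - ?P. card S) + (\<Sum>a\<in>?P. ?q * card S)"
    using outside inside by simp
  also have "\<dots> = (card ?V - card ?P) * card S + card ?P * (?q * card S)"
    using card_Diff_subset[OF fin_P PV] by simp
  finally have "?q * (\<Sum>a\<in>?V. card {s \<in> S. ga_form G a s = 0})
      = (card ?V - card ?P) * card S + card ?P * (?q * card S)" .
  moreover have "(card ?V - card ?P) * card S + card ?P * card S = card ?V * card S"
    using card_mono[OF finite_group_alg PV] by (metis add_mult_distrib le_add_diff_inverse2)
  ultimately show ?thesis
    by linarith
qed

lemma card_mult_card_ga_perp:
  fixes S :: "('g \<Rightarrow> 'k::{field,finite}) set"
  assumes S: "ga_subspace G S"
  shows "card S * card (ga_perp G S) = card (group_alg G :: ('g \<Rightarrow> 'k) set)"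
proof -
  define V where "V = card (group_alg G :: ('g \<Rightarrow> 'k) set)"
  define P where "P = card (ga_perp G S)"
  define q where "q = card (UNIV :: 'k set)"
  define N where "N = (\<Sum>s\<in>S. card {a \<in> group_alg G. ga_form G a s = 0})"
  have fin_S: "finite S"
    using S finite_group_alg by (auto simp: ga_subspace_def intro: finite_subset)
  have "N = (\<Sum>a\<in>group_alg G. card {s \<in> S. ga_form G a s = 0})"
    unfolding N_def by (rule sum_card_filter_commute[OF fin_S finite_group_alg])
  hence "int q * int N + int V = int q * int V + int (card S) * int V"
    and "int q * int N + int P * int (card S) = int V * int (card S) + int P * (int q * int (card S))"
    using arg_cong[OF card_orthogonal_pairs_by_subspace[OF S], of int]
      arg_cong[OF card_orthogonal_pairs_by_group_alg[OF S], of int]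
    by (simp_all add: N_def V_def P_def q_def)
  hence "(int q - 1) * (int V - int (card S) * int P) = 0"
    by algebra
  moreover have "q \<ge> 2"
    unfolding q_def by (rule card_UNIV_field_ge_2)
  ultimately show ?thesis
    by (simp add: V_def P_def flip: of_nat_mult)
qed

lemma ga_perp_perp:
  fixes S :: "('g \<Rightarrow> 'k::{field,finite}) set"
  assumes S: "ga_subspace G S"
  shows "ga_perp G (ga_perp G S) = S"
proof -
  have "S \<subseteq> ga_perp G (ga_perp G S)"
    using S by (auto simp: ga_subspace_def ga_perp_def ga_form_commute)
  moreover have "card (group_alg G :: ('g \<Rightarrow> 'k) set) > 0"
    using finite_group_alg group_alg_zero by (metis card_gt_0_iff empty_iff)
  hence "card (ga_perp G (ga_perp G S)) = card S"
    using card_mult_card_ga_perp[OF S] card_mult_card_ga_perp[OF ga_subspace_perp]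
    by (metis mult.commute mult_left_cancel mult_0_right neq0_conv)
  moreover have "finite (ga_perp G (ga_perp G S))"
    using finite_group_alg by (auto simp: ga_perp_def intro: finite_subset)
  ultimately show ?thesis
    by (metis card_subset_eq)
qed

end


theorem mainTheorem3:
  fixes G :: "('g, 'b) monoid_scheme" and C :: "('g \<Rightarrow> 'k::{field,finite}) set"
  assumes "group G" and "finite (carrier G)" and "right_ideal G C"
  shows "checkable G C \<longleftrightarrow> principal_right_ideal G (ga_perp G C)"
proof -
  interpret finite_group_algebra G
    using assms(1,2) by (simp add: finite_group_algebra_def finite_group_algebra_axioms_def)
  show ?thesis
  proof
    assume "checkable G C"
    then obtain v where "v \<in> group_alg G" and "C = {a \<in> group_alg G. ga_mult G v a = (\<lambda>_. 0)}"
      unfolding checkable_def by blast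
    hence "C = ga_perp G {ga_mult G (ga_adjoint G v) r | r. r \<in> group_alg G}"
      by (simp add: ga_perp_principal ga_adjoint_adjoint)
    hence "ga_perp G C = {ga_mult G (ga_adjoint G v) r | r. r \<in> group_alg G}"
      by (simp add: ga_perp_perp ga_subspace_principal)
    thus "principal_right_ideal G (ga_perp G C)"
      unfolding principal_right_ideal_def using group_alg_adjoint by blast
  next
    assume "principal_right_ideal G (ga_perp G C)"
    then obtain w where "ga_perp G C = {ga_mult G w r | r. r \<in> group_alg G}"
      unfolding principal_right_ideal_def by blast
    hence "C = {a \<in> group_alg G. ga_mult G (ga_adjoint G w) a = (\<lambda>_. 0)}"
      using ga_perp_perp[OF ga_subspace_right_ideal[OF assms(3)]] by (simp add: ga_perp_principal)
    thus "checkable G C"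
      unfolding checkable_def using group_alg_adjoint by blast
  qed
qed

end
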